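(* Let $S$ be a finite set, $T$ a set, $\pi:S\to T$ a map, and $\mathbb{P}$ a $\pi$-measurable probability measure on $S$. Let $J\ge1$, let $T_1,\dots,T_J$ be sets and $\pi_j:S\to T_j$ maps forming a $\pi$-inverse system, let $B_1,\dots,B_J\subseteq S$, and let $\delta_1,\dots,\delta_J\in[0,1/2]$. Let $\mathbb{P}_0,\dots,\mathbb{P}_J$, $\alpha_j$, $M_j^{(1)},M_j^{(2)}$ be as defined in the context. Assume that $B_j$ is $\pi_j$-measurable for every $1\le j\le J$. If \[ \sum_{j=1}^J\min\left\{M_j^{(1)},\frac{M_j^{(2)}}{4\delta_j(1-\delta_j)}\right\}<1, \] then $\mathbb{P}_J\big(\bigcup_{1\le j\le J}B_j\big)<1$.
   Context: A function $f:S\to\mathbb{C}$ is $\pi$-measurable if $f(x)=f(x')$ whenever $\pi(x)=\pi(x')$; a subset $B\subseteq S$ is $\pi$-measurable if $x\in B$, $x'\in S$, $\pi(x')=\pi(x)$ imply $x'\in B$. A probability measure on the finite set $S$ is identified with its mass function $x\mapsto\mathbb{P}(x)$, and it is $\pi$-measurable if this function is. The maps $\pi_1,\dots,\pi_J$ form a $\pi$-inverse system if, setting $\pi_0=\pi$, for every $1\le j\le J$ and $x,x'\in S$, $\pi_j(x)=\pi_j(x')$ implies $\pi_{j-1}(x)=\pi_{j-1}(x')$. Construction: $\mathbb{P}_0=\mathbb{P}$; for $1\le j\le J$ and $x\in S$ let $F_{j-1}(x)=\{x'\in S:\pi_{j-1}(x')=\pi_{j-1}(x)\}$, $\alpha_j(x)=|F_{j-1}(x)\cap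 B_j|/|F_{j-1}(x)|$, and \[ \mathbb{P}_j(x)=\mathbb{P}_{j-1}(x)\cdot\begin{cases}\dfrac{1_{x\notin B_j}}{1-\alpha_j(x)}, & \alpha_j(x)<\delta_j,\\[2mm] \dfrac{\alpha_j(x)-1_{x\in B_j}\delta_j}{\alpha_j(x)(1-\delta_j)}, & \alpha_j(x)\ge\delta_j,\end{cases} \] where in the degenerate case $\alpha_j(x)=0$ (possible in the second case only if $\delta_j=0$) the factor is taken to be $1$. Each $\mathbb{P}_j$ is a probability measure on $S$. For $f:S\to\mathbb{C}$ set $\mathbb{E}_j[f]=\sum_{x\in S}f(x)\mathbb{P}_j(x)$, and $M_j^{(1)}=\mathbb{E}_{j-1}[\alpha_j]$, $M_j^{(2)}=\mathbb{E}_{j-1}[\alpha_j^2]$. When $\delta_j=0$ the term $M_j^{(2)}/(4\delta_j(1-\delta_j))$ is interpreted as $+\infty$, so the minimum equals $M_j^{(1)}$. *)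

theory Defs
  imports Complex_Main
begin

definition pimap :: "('a \<Rightarrow> 'b) \<Rightarrow> (nat \<Rightarrow> 'a \<Rightarrow> 'b) \<Rightarrow> nat \<Rightarrow> 'a \<Rightarrow> 'b" where
  "pimap p0 pis j = (if j = 0 then p0 else pis j)"

definition fibre :: "'a set \<Rightarrow> ('a \<Rightarrow> 'b) \<Rightarrow> (nat \<Rightarrow> 'a \<Rightarrow> 'b) \<Rightarrow> nat \<Rightarrow> 'a \<Rightarrow> 'a set" where
  "fibre S p0 pis j x = {x' \<in> S. pimap p0 pis j x' = pimap p0 pis j x}"

definition alpha :: "'a set \<Rightarrow> ('a \<Rightarrow> 'b) \<Rightarrow> (nat \<Rightarrow> 'a \<Rightarrow> 'b) \<Rightarrow> (nat \<Rightarrow> 'a set) \<Rightarrow> nat \<Rightarrow> 'a \<Rightarrow> real" where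
  "alpha S p0 pis B j x =
     real (card (fibre S p0 pis (j - 1) x \<inter> B j)) / real (card (fibre S p0 pis (j - 1) x))"

definition factor :: "'a set \<Rightarrow> ('a \<Rightarrow> 'b) \<Rightarrow> (nat \<Rightarrow> 'a \<Rightarrow> 'b) \<Rightarrow> (nat \<Rightarrow> 'a set) \<Rightarrow> (nat \<Rightarrow> real) \<Rightarrow> nat \<Rightarrow> 'a \<Rightarrow> real" where
  "factor S p0 pis B \<delta> j x =
     (let a = alpha S p0 pis B j x in
      if a < \<delta> j then (if x \<notin> B j then 1 else 0) / (1 - a)
      else if a = 0 then 1
      else (a - (if x \<in> B j then \<delta> j else 0)) / (a * (1 - \<delta> j)))"

fun Pj :: "'a set \<Rightarrow> ('a \<Rightarrow> 'b) \<Rightarrow> (nat \<Rightarrow> 'a \<Rightarrow> 'b) \<Rightarrow> (nat \<Rightarrow> 'a set) \<Rightarrow> (nat \<Rightarrow> real) \<Rightarrow> ('a \<Rightarrow> real) \<Rightarrow> nat \<Rightarrow> 'a \<Rightarrow> real" where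
  "Pj S p0 pis B \<delta> P 0 x = P x"
| "Pj S p0 pis B \<delta> P (Suc j) x = Pj S p0 pis B \<delta> P j x * factor S p0 pis B \<delta> (Suc j) x"

definition Ej :: "'a set \<Rightarrow> ('a \<Rightarrow> 'b) \<Rightarrow> (nat \<Rightarrow> 'a \<Rightarrow> 'b) \<Rightarrow> (nat \<Rightarrow> 'a set) \<Rightarrow> (nat \<Rightarrow> real) \<Rightarrow> ('a \<Rightarrow> real) \<Rightarrow> nat \<Rightarrow> ('a \<Rightarrow> real) \<Rightarrow> real" where
  "Ej S p0 pis B \<delta> P j f = (\<Sum>x\<in>S. f x * Pj S p0 pis B \<delta> P j x)"

definition M1 :: "'a set \<Rightarrow> ('a \<Rightarrow> 'b) \<Rightarrow> (nat \<Rightarrow> 'a \<Rightarrow> 'b) \<Rightarrow> (nat \<Rightarrow> 'a set) \<Rightarrow> (nat \<Rightarrow> real) \<Rightarrow> ('a \<Rightarrow> real) \<Rightarrow> nat \<Rightarrow> real" where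
  "M1 S p0 pis B \<delta> P j = Ej S p0 pis B \<delta> P (j - 1) (alpha S p0 pis B j)"

definition M2 :: "'a set \<Rightarrow> ('a \<Rightarrow> 'b) \<Rightarrow> (nat \<Rightarrow> 'a \<Rightarrow> 'b) \<Rightarrow> (nat \<Rightarrow> 'a set) \<Rightarrow> (nat \<Rightarrow> real) \<Rightarrow> ('a \<Rightarrow> real) \<Rightarrow> nat \<Rightarrow> real" where
  "M2 S p0 pis B \<delta> P j = Ej S p0 pis B \<delta> P (j - 1) (\<lambda>x. (alpha S p0 pis B j x)^2)"

(* min{M1, M2/(4 delta(1-delta))}, with the delta = 0 convention (term = +infinity) *)
definition bound_term :: "'a set \<Rightarrow> ('a \<Rightarrow> 'b) \<Rightarrow> (nat \<Rightarrow> 'a \<Rightarrow> 'b) \<Rightarrow> (nat \<Rightarrow> 'a set) \<Rightarrow> (nat \<Rightarrow> real) \<Rightarrow> ('a \<Rightarrow> real) \<Rightarrow> nat \<Rightarrow> real" where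
  "bound_term S p0 pis B \<delta> P j =
     (if \<delta> j = 0 then M1 S p0 pis B \<delta> P j
      else min (M1 S p0 pis B \<delta> P j) (M2 S p0 pis B \<delta> P j / (4 * \<delta> j * (1 - \<delta> j))))"

end

theory Submission
  imports Defs
begin

(* Each step j rescales P_(j-1) inside every fibre of pi_(j-1) without changing the mass of
   the fibre, so P_j agrees with P_(j-1) on pi_(j-1)-measurable sets; in particular B_j, being
   pi_k-measurable for all k >= j, keeps its P_j-mass up to step J. On a fibre where B_j has
   relative size a, that mass is max(0, (a - delta)/(1 - delta)) times the mass of the fibre,
   which is at most a and, by 4 delta (a - delta) <= a^2, at most a^2/(4 delta (1 - delta)).
   A union bound finishes the proof. *)

lemma sum_cong_fibres:
  fixes f g :: "'a \<Rightarrow> 'b::comm_monoid_add"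
  assumes "finite S"
    and "\<And>x. x \<in> S \<Longrightarrow> (\<Sum>y\<in>{y \<in> S. q y = q x}. f y) = (\<Sum>y\<in>{y \<in> S. q y = q x}. g y)"
  shows "sum f S = sum g S"
proof -
  have "sum h S = (\<Sum>t\<in>q ` S. \<Sum>y\<in>{y \<in> S. q y = t}. h y)" for h :: "'a \<Rightarrow> 'b"
    using sum.group[OF \<open>finite S\<close> finite_imageI[OF \<open>finite S\<close>], where g = q and h = h] by simp
  then show ?thesis
    using assms(2) by (auto intro: sum.cong)
qed

lemma sum_UN_le:
  fixes f :: "'a \<Rightarrow> 'b::ordered_ab_group_add"
  assumes "finite I" "\<And>i. i \<in> I \<Longrightarrow> finite (A i)" "\<And>x. x \<in> (\<Union>i\<in>I. A i) \<Longrightarrow> 0 \<le> f x"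
  shows "sum f (\<Union>i\<in>I. A i) \<le> (\<Sum>i\<in>I. sum f (A i))"
  using assms
proof (induction I)
  case (insert i I)
  have "0 \<le> sum f (A i \<inter> (\<Union>i\<in>I. A i))"
    using insert.prems by (intro sum_nonneg) auto
  then have "sum f (A i \<union> (\<Union>i\<in>I. A i)) \<le> sum f (A i) + sum f (\<Union>i\<in>I. A i)"
    using insert by (simp add: sum_Un)
  also have "\<dots> \<le> sum f (A i) + (\<Sum>i\<in>I. sum f (A i))"
    using insert by (simp add: add_left_mono)
  finally show ?case
    using insert.hyps by simp
qed simp

lemma sum_bool_valued:
  assumes "finite F" "F \<noteq> {}" and a: "a = real (card (F \<inter> B)) / real (card F)"
  shows "(\<Sum>y\<in>F. \<phi> (y \<in> B)) = real (card F) * (a * \<phi> True + (1 - a) * \<phi> False)"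
proof -
  have "(\<Sum>y\<in>F. \<phi> (y \<in> B)) = (\<Sum>y\<in>F \<inter> B. \<phi> True) + (\<Sum>y\<in>F - B. \<phi> False)"
    using sum.Int_Diff[OF \<open>finite F\<close>, of "\<lambda>y. \<phi> (y \<in> B)" B] by simp
  also have "\<dots> = real (card (F \<inter> B)) * \<phi> True + (real (card F) - real (card (F \<inter> B))) * \<phi> False"
    using card_Int_Diff[OF \<open>finite F\<close>, of B] by simp
  also have "\<dots> = real (card F) * (a * \<phi> True + (1 - a) * \<phi> False)"
    using assms by (simp add: algebra_simps)
  finally show ?thesis .
qed

definition reweight :: "real \<Rightarrow> real \<Rightarrow> bool \<Rightarrow> real" where
  "reweight d a b =
     (if a < d then (if b then 0 else 1 / (1 - a))
      else if a = 0 then 1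
      else (a - (if b then d else 0)) / (a * (1 - d)))"

definition residual_mass :: "real \<Rightarrow> real \<Rightarrow> real" where
  "residual_mass d a = (if a < d then 0 else (a - d) / (1 - d))"

lemma reweight_nonneg: "0 \<le> a \<Longrightarrow> d < 1 \<Longrightarrow> 0 \<le> reweight d a b"
  unfolding reweight_def by (auto intro!: divide_nonneg_pos)

lemma reweight_mean:
  assumes "0 \<le> a" "d < 1"
  shows "a * reweight d a True + (1 - a) * reweight d a False = 1"
proof -
  have "1 - a \<noteq> 0" if "a < d"
    using that assms by simp
  moreover have "a * ((a - d) / (a * (1 - d))) + (1 - a) * (a / (a * (1 - d))) = 1" if "a \<noteq> 0"
  proof -
    have "a * ((a - d) / (a * (1 - d))) + (1 - a) * (a / (a * (1 - d))) = ((a - d) + (1 - a)) / (1 - d)"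
      using that by (simp add: add_divide_distrib[symmetric])
    then show ?thesis
      using assms by simp
  qed
  ultimately show ?thesis
    unfolding reweight_def by auto
qed

lemma reweight_True: "0 \<le> d \<Longrightarrow> a * reweight d a True = residual_mass d a"
  unfolding reweight_def residual_mass_def by auto

lemma residual_mass_le: "0 \<le> d \<Longrightarrow> d < 1 \<Longrightarrow> 0 \<le> a \<Longrightarrow> a \<le> 1 \<Longrightarrow> residual_mass d a \<le> a"
  unfolding residual_mass_def by (auto simp: divide_le_eq algebra_simps mult_left_le_one_le)

lemma residual_mass_le_square:
  assumes "0 < d" "d < 1"
  shows "residual_mass d a \<le> a\<^sup>2 / (4 * d * (1 - d))"
proof (cases "a < d")
  case False
  have "4 * d * (a - d) \<le> a\<^sup>2"
    using zero_le_power2[of "a - 2 * d"] by (simp add: power2_eq_square algebra_simps)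
  then have "(4 * d * (a - d)) / (4 * d * (1 - d)) \<le> a\<^sup>2 / (4 * d * (1 - d))"
    using assms by (intro divide_right_mono) auto
  then show ?thesis
    using False assms by (simp add: residual_mass_def)
qed (use assms in \<open>simp add: residual_mass_def\<close>)

lemma factor_eq_reweight:
  "factor S p0 pis B \<delta> j x = reweight (\<delta> j) (alpha S p0 pis B j x) (x \<in> B j)"
  unfolding factor_def reweight_def Let_def by simp

lemma alpha_cong:
  "pimap p0 pis (j - 1) x = pimap p0 pis (j - 1) y \<Longrightarrow> alpha S p0 pis B j x = alpha S p0 pis B j y"
  unfolding alpha_def fibre_def by simp

lemma alpha_fibre_const:
  "y \<in> fibre S p0 pis j x \<Longrightarrow> alpha S p0 pis B (Suc j) y = alpha S p0 pis B (Suc j) x"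
  by (intro alpha_cong) (simp add: fibre_def)

lemma alpha_bounds:
  assumes "finite S" "x \<in> S"
  shows "0 \<le> alpha S p0 pis B j x" "alpha S p0 pis B j x \<le> 1"
proof -
  let ?F = "fibre S p0 pis (j - 1) x"
  have "finite ?F" "x \<in> ?F"
    using assms by (auto simp: fibre_def)
  then have "card (?F \<inter> B j) \<le> card ?F" "0 < card ?F"
    by (auto simp: card_mono card_gt_0_iff)
  then show "0 \<le> alpha S p0 pis B j x" "alpha S p0 pis B j x \<le> 1"
    by (simp_all add: alpha_def)
qed

locale reweighting_scheme =
  fixes S :: "'a set" and p0 :: "'a \<Rightarrow> 'b" and pis :: "nat \<Rightarrow> 'a \<Rightarrow> 'b"
    and P :: "'a \<Rightarrow> real" and J :: nat and B :: "nat \<Rightarrow> 'a set" and \<delta> :: "nat \<Rightarrow> real"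
  assumes finite_S: "finite S"
    and P_nonneg: "\<And>x. x \<in> S \<Longrightarrow> 0 \<le> P x"
    and P_measurable: "\<And>x y. x \<in> S \<Longrightarrow> y \<in> S \<Longrightarrow> p0 x = p0 y \<Longrightarrow> P x = P y"
    and inverse_system: "\<And>j x y. j \<in> {1..J} \<Longrightarrow> x \<in> S \<Longrightarrow> y \<in> S \<Longrightarrow>
           pimap p0 pis j x = pimap p0 pis j y \<Longrightarrow> pimap p0 pis (j - 1) x = pimap p0 pis (j - 1) y"
    and B_measurable: "\<And>j x y. j \<in> {1..J} \<Longrightarrow> x \<in> B j \<Longrightarrow> y \<in> S \<Longrightarrow> pis j y = pis j x \<Longrightarrow> y \<in> B j"
    and \<delta>_range: "\<And>j. j \<in> {1..J} \<Longrightarrow> 0 \<le> \<delta> j \<and> \<delta> j < 1"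
begin

abbreviation "\<pi> \<equiv> pimap p0 pis"
abbreviation "F \<equiv> fibre S p0 pis"
abbreviation "\<alpha> \<equiv> alpha S p0 pis B"
abbreviation "fac \<equiv> factor S p0 pis B \<delta>"
abbreviation "Pr \<equiv> Pj S p0 pis B \<delta> P"
abbreviation "E \<equiv> Ej S p0 pis B \<delta> P"

lemma pimap_refines:
  assumes "j \<le> k" "k \<le> J" "x \<in> S" "y \<in> S"
  shows "\<pi> k x = \<pi> k y \<Longrightarrow> \<pi> j x = \<pi> j y"
  using assms(1,2)
proof (induction k rule: dec_induct)
  case (step n)
  then show ?case
    using inverse_system[of "Suc n" x y] assms(3,4) by simp
qed

lemma B_measurable_refined:
  assumes "j \<in> {1..J}" "j \<le> k" "k \<le> J" "x \<in> S" "y \<in> S" "\<pi> k x = \<pi> k y"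
  shows "x \<in> B j \<longleftrightarrow> y \<in> B j"
proof -
  have "pis j x = pis j y"
    using pimap_refines[OF assms(2-6)] assms(1) by (simp add: pimap_def)
  then show ?thesis
    using B_measurable[OF assms(1)] assms(4,5) by metis
qed

lemma factor_measurable:
  assumes "j \<in> {1..J}" "x \<in> S" "y \<in> S" "\<pi> j x = \<pi> j y"
  shows "fac j x = fac j y"
proof -
  have "\<alpha> j x = \<alpha> j y"
    using alpha_cong inverse_system assms by metis
  moreover have "x \<in> B j \<longleftrightarrow> y \<in> B j"
    using B_measurable_refined assms by auto
  ultimately show ?thesis
    by (simp add: factor_eq_reweight)
qed

lemma Pj_measurable: "k \<le> J \<Longrightarrow> x \<in> S \<Longrightarrow> y \<in> S \<Longrightarrow> \<pi> k x = \<pi> k y \<Longrightarrow> Pr k x = Pr k y"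
proof (induction k)
  case 0
  then show ?case
    using P_measurable[of x y] by (simp add: pimap_def)
next
  case (Suc k)
  have "\<pi> k x = \<pi> k y"
    using inverse_system[of "Suc k" x y] Suc.prems by simp
  then have "Pr k x = Pr k y"
    using Suc.IH Suc.prems by simp
  moreover have "fac (Suc k) x = fac (Suc k) y"
    using factor_measurable[of "Suc k" x y] Suc.prems by simp
  ultimately show ?case
    by simp
qed

lemma Pj_nonneg: "k \<le> J \<Longrightarrow> x \<in> S \<Longrightarrow> 0 \<le> Pr k x"
proof (induction k)
  case (Suc k)
  have "0 \<le> fac (Suc k) x"
    unfolding factor_eq_reweight
    using alpha_bounds(1)[OF finite_S Suc.prems(2)] \<delta>_range[of "Suc k"] Suc.prems(1)
    by (intro reweight_nonneg) auto
  then show ?case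
    using Suc by simp
qed (simp add: P_nonneg)

lemma sum_factor_fibre:
  assumes "Suc j \<le> J" "x \<in> S"
  shows "(\<Sum>y\<in>F j x. fac (Suc j) y) = real (card (F j x))"
    and "(\<Sum>y\<in>F j x. if y \<in> B (Suc j) then fac (Suc j) y else 0)
           = real (card (F j x)) * residual_mass (\<delta> (Suc j)) (\<alpha> (Suc j) x)"
proof -
  define a where "a = \<alpha> (Suc j) x"
  define d where "d = \<delta> (Suc j)"
  have d: "0 \<le> d" "d < 1"
    using \<delta>_range[of "Suc j"] assms(1) by (auto simp: d_def)
  have a: "0 \<le> a"
    using alpha_bounds(1)[OF finite_S assms(2)] by (simp add: a_def)
  have fac: "fac (Suc j) y = reweight d a (y \<in> B (Suc j))" if "y \<in> F j x" for y
    using alpha_fibre_const[OF that] by (simp add: factor_eq_reweight a_def d_def)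
  have F: "finite (F j x)" "F j x \<noteq> {}"
    using finite_S assms(2) by (auto simp: fibre_def)
  have a_ratio: "a = real (card (F j x \<inter> B (Suc j))) / real (card (F j x))"
    by (simp add: a_def alpha_def)
  show "(\<Sum>y\<in>F j x. fac (Suc j) y) = real (card (F j x))"
    using sum_bool_valued[OF F a_ratio, of "reweight d a"] reweight_mean[OF a d(2)]
    by (simp add: fac cong: sum.cong)
  have "residual_mass (\<delta> (Suc j)) (\<alpha> (Suc j) x) = a * reweight d a True"
    using reweight_True[OF d(1)] by (simp add: a_def d_def)
  moreover have "(\<Sum>y\<in>F j x. if y \<in> B (Suc j) then fac (Suc j) y else 0)
      = (\<Sum>y\<in>F j x. if y \<in> B (Suc j) then reweight d a (y \<in> B (Suc j)) else 0)"
    by (rule sum.cong) (simp_all add: fac)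
  ultimately show "(\<Sum>y\<in>F j x. if y \<in> B (Suc j) then fac (Suc j) y else 0)
          = real (card (F j x)) * residual_mass (\<delta> (Suc j)) (\<alpha> (Suc j) x)"
    using sum_bool_valued[OF F a_ratio, of "\<lambda>b. if b then reweight d a b else 0"] by simp
qed

lemma Pj_fibre_const: "k \<le> J \<Longrightarrow> y \<in> F k x \<Longrightarrow> x \<in> S \<Longrightarrow> Pr k y = Pr k x"
  using Pj_measurable[of k y x] by (simp add: fibre_def)

lemma sum_Pj_Suc_measurable:
  assumes j: "Suc j \<le> J"
    and A: "\<And>x y. x \<in> S \<Longrightarrow> y \<in> S \<Longrightarrow> \<pi> j x = \<pi> j y \<Longrightarrow> x \<in> A \<longleftrightarrow> y \<in> A"
  shows "sum (Pr (Suc j)) (S \<inter> A) = sum (Pr j) (S \<inter> A)"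
proof -
  have "(\<Sum>x\<in>S. if x \<in> A then Pr (Suc j) x else 0) = (\<Sum>x\<in>S. if x \<in> A then Pr j x else 0)"
  proof (rule sum_cong_fibres[OF finite_S, where q = "\<pi> j"], fold fibre_def)
    fix x assume x: "x \<in> S"
    define c where "c = (if x \<in> A then Pr j x else 0)"
    have const: "(if y \<in> A then Pr j y else 0) = c" if y: "y \<in> F j x" for y
      using y A[of y x] x Pj_fibre_const[OF Suc_leD[OF j] y x] by (simp add: c_def fibre_def)
    have "(\<Sum>y\<in>F j x. if y \<in> A then Pr (Suc j) y else 0) = (\<Sum>y\<in>F j x. c * fac (Suc j) y)"
    proof (rule sum.cong)
      fix y assume "y \<in> F j x"
      then show "(if y \<in> A then Pr (Suc j) y else 0) = c * fac (Suc j) y"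
        using const[of y] by (cases "y \<in> A") auto
    qed simp
    also have "\<dots> = c * real (card (F j x))"
      by (simp add: sum_distrib_left[symmetric] sum_factor_fibre(1)[OF j x])
    also have "\<dots> = (\<Sum>y\<in>F j x. c)"
      by simp
    also have "\<dots> = (\<Sum>y\<in>F j x. if y \<in> A then Pr j y else 0)"
      by (rule sum.cong[OF refl]) (rule const[symmetric])
    finally show "(\<Sum>y\<in>F j x. if y \<in> A then Pr (Suc j) y else 0)
        = (\<Sum>y\<in>F j x. if y \<in> A then Pr j y else 0)" .
  qed
  then show ?thesis
    unfolding sum.inter_restrict[OF finite_S] .
qed

lemma sum_Pj_Suc_B:
  assumes j: "Suc j \<le> J"
  shows "sum (Pr (Suc j)) (S \<inter> B (Suc j)) = E j (\<lambda>x. residual_mass (\<delta> (Suc j)) (\<alpha> (Suc j) x))"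
proof -
  have "(\<Sum>x\<in>S. if x \<in> B (Suc j) then Pr (Suc j) x else 0)
      = (\<Sum>x\<in>S. residual_mass (\<delta> (Suc j)) (\<alpha> (Suc j) x) * Pr j x)"
  proof (rule sum_cong_fibres[OF finite_S, where q = "\<pi> j"], fold fibre_def)
    fix x assume x: "x \<in> S"
    define r where "r = residual_mass (\<delta> (Suc j)) (\<alpha> (Suc j) x)"
    have "(\<Sum>y\<in>F j x. if y \<in> B (Suc j) then Pr (Suc j) y else 0)
        = (\<Sum>y\<in>F j x. Pr j x * (if y \<in> B (Suc j) then fac (Suc j) y else 0))"
    proof (rule sum.cong)
      fix y assume y: "y \<in> F j x"
      show "(if y \<in> B (Suc j) then Pr (Suc j) y else 0) = Pr j x * (if y \<in> B (Suc j) then fac (Suc j) y else 0)"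
        using Pj_fibre_const[OF Suc_leD[OF j] y x] by simp
    qed simp
    also have "\<dots> = real (card (F j x)) * (r * Pr j x)"
      by (simp add: sum_distrib_left[symmetric] sum_factor_fibre(2)[OF j x] r_def)
    also have "\<dots> = (\<Sum>y\<in>F j x. r * Pr j x)"
      by simp
    also have "\<dots> = (\<Sum>y\<in>F j x. residual_mass (\<delta> (Suc j)) (\<alpha> (Suc j) y) * Pr j y)"
    proof (rule sum.cong[OF refl])
      fix y assume y: "y \<in> F j x"
      show "r * Pr j x = residual_mass (\<delta> (Suc j)) (\<alpha> (Suc j) y) * Pr j y"
        using alpha_fibre_const[OF y] Pj_fibre_const[OF Suc_leD[OF j] y x] by (simp add: r_def)
    qed
    finally show "(\<Sum>y\<in>F j x. if y \<in> B (Suc j) then Pr (Suc j) y else 0)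
        = (\<Sum>y\<in>F j x. residual_mass (\<delta> (Suc j)) (\<alpha> (Suc j) y) * Pr j y)" .
  qed
  then show ?thesis
    unfolding sum.inter_restrict[OF finite_S] Ej_def .
qed

lemma sum_Pj_B_later:
  assumes "j \<in> {1..J}" "j \<le> k" "k \<le> J"
  shows "sum (Pr k) (S \<inter> B j) = sum (Pr j) (S \<inter> B j)"
  using assms(2,3)
proof (induction k rule: dec_induct)
  case (step n)
  have "sum (Pr (Suc n)) (S \<inter> B j) = sum (Pr n) (S \<inter> B j)"
  proof (rule sum_Pj_Suc_measurable)
    show "Suc n \<le> J"
      using step by simp
    show "x \<in> B j \<longleftrightarrow> y \<in> B j" if "x \<in> S" "y \<in> S" "\<pi> n x = \<pi> n y" for x y
      using B_measurable_refined[OF assms(1) _ _ that] step by simp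
  qed
  then show ?case
    using step by simp
qed simp

lemma Ej_mono: "k \<le> J \<Longrightarrow> (\<And>x. x \<in> S \<Longrightarrow> f x \<le> g x) \<Longrightarrow> E k f \<le> E k g"
  unfolding Ej_def by (intro sum_mono mult_right_mono Pj_nonneg)

lemma sum_Pj_B_le_bound_term:
  assumes j: "j \<in> {1..J}"
  shows "sum (Pr j) (S \<inter> B j) \<le> bound_term S p0 pis B \<delta> P j"
proof -
  obtain k where k: "j = Suc k"
    using j by (cases j) auto
  have kJ: "k \<le> J" and d: "0 \<le> \<delta> j" "\<delta> j < 1"
    using j \<delta>_range[OF j] k by auto
  have mass: "sum (Pr j) (S \<inter> B j) = E k (\<lambda>x. residual_mass (\<delta> j) (\<alpha> j x))"
    using sum_Pj_Suc_B[of k] j k by simp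
  have le_M1: "sum (Pr j) (S \<inter> B j) \<le> M1 S p0 pis B \<delta> P j"
  proof -
    have "E k (\<lambda>x. residual_mass (\<delta> j) (\<alpha> j x)) \<le> E k (\<alpha> j)"
      using kJ d alpha_bounds[OF finite_S] by (intro Ej_mono residual_mass_le) auto
    then show ?thesis
      using mass by (simp add: M1_def k)
  qed
  have le_M2: "sum (Pr j) (S \<inter> B j) \<le> M2 S p0 pis B \<delta> P j / (4 * \<delta> j * (1 - \<delta> j))" if "0 < \<delta> j"
  proof -
    have "sum (Pr j) (S \<inter> B j) \<le> E k (\<lambda>x. (\<alpha> j x)\<^sup>2 / (4 * \<delta> j * (1 - \<delta> j)))"
      unfolding mass using kJ d that by (auto intro!: Ej_mono residual_mass_le_square)
    then show ?thesis
      by (simp add: M2_def Ej_def k sum_divide_distrib)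
  qed
  show ?thesis
    unfolding bound_term_def using le_M1 le_M2 d by auto
qed

end

theorem theorem2p1:
  fixes S :: "'a set" and p0 :: "'a \<Rightarrow> 'b" and pis :: "nat \<Rightarrow> 'a \<Rightarrow> 'b"
    and P :: "'a \<Rightarrow> real" and J :: nat and B :: "nat \<Rightarrow> 'a set" and \<delta> :: "nat \<Rightarrow> real"
  assumes finS: "finite S"
    and P_nonneg: "\<forall>x\<in>S. 0 \<le> P x"
    and P_sum: "(\<Sum>x\<in>S. P x) = 1"
    and P_meas: "\<forall>x\<in>S. \<forall>x'\<in>S. p0 x = p0 x' \<longrightarrow> P x = P x'"
    and J_pos: "J \<ge> 1"
    and inv_sys: "\<forall>j\<in>{1..J}. \<forall>x\<in>S. \<forall>x'\<in>S.
                    pimap p0 pis j x = pimap p0 pis j x' \<longrightarrow> pimap p0 pis (j - 1) x = pimap p0 pis (j - 1) x'"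
    and B_sub: "\<forall>j\<in>{1..J}. B j \<subseteq> S"
    and B_meas: "\<forall>j\<in>{1..J}. \<forall>x\<in>B j. \<forall>x'\<in>S. pis j x' = pis j x \<longrightarrow> x' \<in> B j"
    and \<delta>_range: "\<forall>j\<in>{1..J}. 0 \<le> \<delta> j \<and> \<delta> j \<le> 1/2"
    and small: "(\<Sum>j=1..J. bound_term S p0 pis B \<delta> P j) < 1"
  shows "(\<Sum>x\<in>S \<inter> (\<Union>j\<in>{1..J}. B j). Pj S p0 pis B \<delta> P J x) < 1"
proof -
  interpret reweighting_scheme S p0 pis P J B \<delta>
  proof
    show "\<And>j. j \<in> {1..J} \<Longrightarrow> 0 \<le> \<delta> j \<and> \<delta> j < 1"
      using \<delta>_range by fastforce
  qed (use finS P_nonneg P_meas inv_sys B_meas in blast)+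
  have "S \<inter> (\<Union>j\<in>{1..J}. B j) = (\<Union>j\<in>{1..J}. S \<inter> B j)"
    by blast
  moreover have "sum (Pr J) (\<Union>j\<in>{1..J}. S \<inter> B j) \<le> (\<Sum>j=1..J. sum (Pr J) (S \<inter> B j))"
    using finS Pj_nonneg[of J] by (intro sum_UN_le) auto
  ultimately have "sum (Pr J) (S \<inter> (\<Union>j\<in>{1..J}. B j)) \<le> (\<Sum>j=1..J. sum (Pr J) (S \<inter> B j))"
    by simp
  also have "\<dots> = (\<Sum>j=1..J. sum (Pr j) (S \<inter> B j))"
  proof (rule sum.cong[OF refl])
    fix j assume "j \<in> {1..J}"
    then show "sum (Pr J) (S \<inter> B j) = sum (Pr j) (S \<inter> B j)"
      by (intro sum_Pj_B_later) auto
  qed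
  also have "\<dots> \<le> (\<Sum>j=1..J. bound_term S p0 pis B \<delta> P j)"
    using sum_Pj_B_le_bound_term by (intro sum_mono)
  finally show ?thesis
    using small by simp
qed

end
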